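(* Let $\boldsymbol\beta\in\mathbb R^p$ have support $\mathcal A$ with $\boldsymbol z_{\mathcal A}=\mathbf 1$ (all nonzero entries positive), let $\lambda>0$, and let $\tilde{\mathbf Z}$ be any $p\times p$ diagonal matrix with diagonal entries in $\{-1,+1\}$; put $\tilde{\boldsymbol\beta}=\tilde{\mathbf Z}\boldsymbol\beta$. Then for every design $\mathbf X$, $\phi_\lambda(\mathbf X\mid\tilde{\boldsymbol\beta})=\phi_\lambda(\mathbf X\tilde{\mathbf Z}\mid\boldsymbol\beta)$. Moreover, if $\mathbf X^*$ maximizes $\phi_\lambda(\cdot\mid\boldsymbol\beta)$ over all designs, then $\mathbf X^*\tilde{\mathbf Z}$ maximizes $\phi_\lambda(\cdot\mid\tilde{\boldsymbol\beta})$ over all designs.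
   Context: A design is an $n\times p$ matrix $\mathbf X$ with entries in $\{-1,+1\}$. Let $\mathbf P_1=n^{-1}\mathbf 1\mathbf 1^T$, let $\mathbf V$ be the diagonal matrix whose diagonal entries are those of $n^{-1}\mathbf X^T(\mathbf I-\mathbf P_1)\mathbf X$, let $\mathbf F=(\mathbf I-\mathbf P_1)\mathbf X\mathbf V^{-1/2}$ and $\mathbf C=n^{-1}\mathbf F^T\mathbf F$. For $\boldsymbol\beta\in\mathbb R^p$, its support is $\mathcal A=\{j:\beta_j\neq0\}$ with $|\mathcal A|=k\ge1$, $\mathcal I$ is the complement, $\boldsymbol z=\mathrm{sign}(\boldsymbol\beta)$, $\mathbf Z_{\mathcal A}=\mathrm{Diag}(\boldsymbol z_{\mathcal A})$. Subscripts: $\mathbf F_{\mathcal T}$ = columns in $\mathcal T$; $\boldsymbol w_{\mathcal T}$ = subvector; $\mathbf M_{\mathcal U\mathcal T}$ = rows $\mathcal U$, columns $\mathcal T$; $\mathbf M_{\mathcal T}=\mathbf M_{\mathcal T\mathcal T}$. Designs considered are those with $\mathbf C_{\mathcal A}$ invertible and positive diagonal of $\mathbf V_{\mathcal A}$. Let $\mathbf P_{\mathcal A}=\mathbf F_{\mathcal A}(\mathbf F_{\mathcal A}^T\mathbf F_{\mathcal A})^{-1}\mathbf F_{\mathcal A}^T$, $\lambda_n=\lambda\sqrt n$, $\boldsymbol e\sim N(\mathbf 0,\mathbf I_n)$, $\boldsymbol u=-n^{-1/2}\mathbf Z_{\mathcal A}\mathbf C_{\mathcal A}^{-1}\mathbf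 F_{\mathcal A}^T\boldsymbol e+\lambda_n\mathbf Z_{\mathcal A}\mathbf C_{\mathcal A}^{-1}\boldsymbol z_{\mathcal A}$, $\boldsymbol v=n^{-1/2}\mathbf F_{\mathcal I}^T(\mathbf I-\mathbf P_{\mathcal A})\boldsymbol e+\lambda_n\mathbf C_{\mathcal I\mathcal A}\mathbf C_{\mathcal A}^{-1}\boldsymbol z_{\mathcal A}$, $S_\lambda=\{\boldsymbol u<\sqrt n\,\mathbf Z_{\mathcal A}\mathbf V_{\mathcal A}^{1/2}\boldsymbol\beta_{\mathcal A}\}$ and $I_\lambda=\{|\boldsymbol v|\le\lambda_n\mathbf 1\}$ (componentwise). The sign recovery criterion of design $\mathbf X$ under $\boldsymbol\beta$ is $\phi_\lambda(\mathbf X\mid\boldsymbol\beta)=P(S_\lambda\cap I_\lambda)$, with all quantities computed from $\mathbf X$ and $\boldsymbol\beta$. *)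

theory Defs
  imports "HOL-Probability.Probability" "Jordan_Normal_Form.DL_Submatrix"
          "Jordan_Normal_Form.Gauss_Jordan_Elimination"
begin

text \<open>Matrices/vectors are Jordan_Normal_Form matrices; n = dim_row X, p = dim_col X.
  Index subsets are taken in increasing order via pick.\<close>

definition is_design :: "nat \<Rightarrow> nat \<Rightarrow> real mat \<Rightarrow> bool" where
  "is_design n p X \<longleftrightarrow> X \<in> carrier_mat n p \<and> (\<forall>i<n. \<forall>j<p. X $$ (i,j) \<in> {-1, 1})"

definition supp :: "real vec \<Rightarrow> nat set" where
  "supp b = {j. j < dim_vec b \<and> b $ j \<noteq> 0}"

definition compl_supp :: "real vec \<Rightarrow> nat set" where
  "compl_supp b = {j. j < dim_vec b \<and> b $ j = 0}"

definition subvec :: "'a vec \<Rightarrow> nat set \<Rightarrow> 'a vec" where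
  "subvec v T = vec (card {i. i < dim_vec v \<and> i \<in> T}) (\<lambda>i. v $ pick T i)"

definition minv :: "real mat \<Rightarrow> real mat" where
  "minv M = the (mat_inverse M)"

definition P1 :: "nat \<Rightarrow> real mat" where
  "P1 n = (1 / real n) \<cdot>\<^sub>m mat n n (\<lambda>_. 1)"

definition Vmat :: "real mat \<Rightarrow> real mat" where
  "Vmat X = (let n = dim_row X; p = dim_col X;
     G = (1 / real n) \<cdot>\<^sub>m (X\<^sup>T * (1\<^sub>m n - P1 n) * X)
   in mat_diag p (\<lambda>j. G $$ (j,j)))"

text \<open>V^{-1/2}: diagonal with entries 1/sqrt(V_jj) (using 1/0 = 0 if V_jj = 0).\<close>
definition Fmat :: "real mat \<Rightarrow> real mat" where
  "Fmat X = (let n = dim_row X; p = dim_col X; V = Vmat X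
   in (1\<^sub>m n - P1 n) * X * mat_diag p (\<lambda>j. 1 / sqrt (V $$ (j,j))))"

definition Cmat :: "real mat \<Rightarrow> real mat" where
  "Cmat X = (1 / real (dim_row X)) \<cdot>\<^sub>m ((Fmat X)\<^sup>T * Fmat X)"

definition admissible :: "nat \<Rightarrow> nat \<Rightarrow> real vec \<Rightarrow> real mat \<Rightarrow> bool" where
  "admissible n p b X \<longleftrightarrow> is_design n p X \<and> dim_vec b = p \<and>
     invertible_mat (submatrix (Cmat X) (supp b) (supp b)) \<and>
     (\<forall>j \<in> supp b. Vmat X $$ (j,j) > 0)"

definition gauss :: "nat \<Rightarrow> (nat \<Rightarrow> real) measure" where
  "gauss n = PiM {..<n} (\<lambda>_. density lborel std_normal_density)"

definition u_vec :: "real \<Rightarrow> real mat \<Rightarrow> real vec \<Rightarrow> real vec \<Rightarrow> real vec" where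
  "u_vec lam X b e = (let n = dim_row X; A = supp b; F = Fmat X; C = Cmat X;
     FA = submatrix F UNIV A; CAi = minv (submatrix C A A);
     zA = subvec (map_vec sgn b) A; k = dim_vec zA; ZA = mat_diag k (\<lambda>i. zA $ i);
     lamn = lam * sqrt (real n)
   in (- (1 / sqrt (real n))) \<cdot>\<^sub>v ((ZA * CAi * FA\<^sup>T) *\<^sub>v e) + lamn \<cdot>\<^sub>v ((ZA * CAi) *\<^sub>v zA))"

definition v_vec :: "real \<Rightarrow> real mat \<Rightarrow> real vec \<Rightarrow> real vec \<Rightarrow> real vec" where
  "v_vec lam X b e = (let n = dim_row X; A = supp b; I = compl_supp b; F = Fmat X; C = Cmat X;
     FA = submatrix F UNIV A; FI = submatrix F UNIV I;
     PA = FA * minv (FA\<^sup>T * FA) * FA\<^sup>T;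
     CAi = minv (submatrix C A A); CIA = submatrix C I A;
     zA = subvec (map_vec sgn b) A; lamn = lam * sqrt (real n)
   in (1 / sqrt (real n)) \<cdot>\<^sub>v ((FI\<^sup>T * (1\<^sub>m n - PA)) *\<^sub>v e) + lamn \<cdot>\<^sub>v ((CIA * CAi) *\<^sub>v zA))"

definition S_event :: "real \<Rightarrow> real mat \<Rightarrow> real vec \<Rightarrow> real vec \<Rightarrow> bool" where
  "S_event lam X b e = (let n = dim_row X; A = supp b; V = Vmat X;
     zA = subvec (map_vec sgn b) A; k = dim_vec zA; ZA = mat_diag k (\<lambda>i. zA $ i);
     VAh = mat_diag k (\<lambda>i. sqrt (submatrix V A A $$ (i,i)));
     rhs = sqrt (real n) \<cdot>\<^sub>v ((ZA * VAh) *\<^sub>v subvec b A);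
     u = u_vec lam X b e
   in \<forall>i<k. u $ i < rhs $ i)"

definition I_event :: "real \<Rightarrow> real mat \<Rightarrow> real vec \<Rightarrow> real vec \<Rightarrow> bool" where
  "I_event lam X b e = (let v = v_vec lam X b e
   in \<forall>i<dim_vec v. \<bar>v $ i\<bar> \<le> lam * sqrt (real (dim_row X)))"

definition phi :: "real \<Rightarrow> real mat \<Rightarrow> real vec \<Rightarrow> real" where
  "phi lam X b = (let n = dim_row X in
     measure (gauss n) {e \<in> space (gauss n).
        S_event lam X b (vec n e) \<and> I_event lam X b (vec n e)})"

end

theory Submission
  imports Defs
begin

text \<open>Multiplying the columns of a design by signs, \<open>X \<mapsto> X D\<close> with \<open>D = diag(\<plusminus>1)\<close>, leaves
  \<open>V\<close> unchanged and maps \<open>F \<mapsto> F D\<close>, \<open>C \<mapsto> D C D\<close>; on the support \<open>A\<close> this gives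
  \<open>F\<^sub>A D\<^sub>A\<close> and \<open>D\<^sub>A C\<^sub>A D\<^sub>A\<close>, and the sign vector of \<open>D \<beta>\<close> on \<open>A\<close> is \<open>D\<^sub>A z\<^sub>A\<close>.
  Since \<open>D\<^sub>A\<^sup>2 = I\<close> and diagonal matrices commute, \<open>u\<close> and the threshold of \<open>S\<^sub>\<lambda>\<close> are the same
  for \<open>(X, D \<beta>)\<close> and \<open>(X D, \<beta>)\<close>, \<open>P\<^sub>A\<close> is unchanged, and \<open>v\<close> for \<open>(X D, \<beta>)\<close> is \<open>D\<^sub>I\<close> times
  \<open>v\<close> for \<open>(X, D \<beta>)\<close>, which does not affect \<open>|v| \<le> \<lambda>\<^sub>n\<close>. So both events, and hence
  \<open>\<phi>\<^sub>\<lambda>\<close>, agree; admissibility is preserved as well, and since \<open>X \<mapsto> X D\<close> is an involution it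
  carries maximizers to maximizers.\<close>

lemma mult_mat_assoc_dims:
  "dim_col A = dim_row B \<Longrightarrow> dim_col B = dim_row C \<Longrightarrow> A * B * C = A * (B * C)"
  by (rule assoc_mult_mat[of A "dim_row A" "dim_col A" B "dim_col B" C "dim_col C"]) auto

lemma mult_mat_vec_assoc_dims:
  "dim_col A = dim_row B \<Longrightarrow> dim_col B = dim_vec v \<Longrightarrow> (A * B) *\<^sub>v v = A *\<^sub>v (B *\<^sub>v v)"
  by (rule assoc_mult_mat_vec[of A "dim_row A" "dim_col A" B "dim_col B" v]) auto

lemma transpose_mult_dims: "dim_col A = dim_row B \<Longrightarrow> (A * B)\<^sup>T = B\<^sup>T * A\<^sup>T"
  for A B :: "'a :: comm_semiring_0 mat"
  by (rule transpose_mult[of A "dim_row A" "dim_col A" B "dim_col B"]) auto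

lemma mult_mat_cancel_left:
  fixes A B :: "'a :: semiring_1 mat"
  assumes A: "A \<in> carrier_mat k k" and B: "B \<in> carrier_mat k k" and AB: "A * B = 1\<^sub>m k"
    and "dim_row Y = k"
  shows "A * (B * Y) = Y"
proof -
  have Y: "Y \<in> carrier_mat k (dim_col Y)" using \<open>dim_row Y = k\<close> by auto
  have "A * (B * Y) = (A * B) * Y" using assoc_mult_mat[OF A B Y] by simp
  also have "\<dots> = Y" unfolding AB by (rule left_mult_one_mat[OF Y])
  finally show ?thesis .
qed

lemma mult_mat_vec_cancel_left:
  fixes A B :: "'a :: semiring_1 mat"
  assumes A: "A \<in> carrier_mat k k" and B: "B \<in> carrier_mat k k" and AB: "A * B = 1\<^sub>m k"
    and "dim_vec v = k"
  shows "A *\<^sub>v (B *\<^sub>v v) = v"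
proof -
  have v: "v \<in> carrier_vec k" using \<open>dim_vec v = k\<close> by auto
  have "A *\<^sub>v (B *\<^sub>v v) = (A * B) *\<^sub>v v" using assoc_mult_mat_vec[OF A B v] by simp
  also have "\<dots> = v" unfolding AB by (rule one_mult_mat_vec[OF v])
  finally show ?thesis .
qed

lemma mult_mat_commute_left:
  fixes A B :: "'a :: semiring_1 mat"
  assumes A: "A \<in> carrier_mat k k" and B: "B \<in> carrier_mat k k" and AB: "A * B = B * A"
    and "dim_row Y = k"
  shows "A * (B * Y) = B * (A * Y)"
proof -
  have Y: "Y \<in> carrier_mat k (dim_col Y)" using \<open>dim_row Y = k\<close> by auto
  have "A * (B * Y) = (A * B) * Y" using assoc_mult_mat[OF A B Y] by simp
  also have "\<dots> = B * (A * Y)" unfolding AB by (rule assoc_mult_mat[OF B A Y])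
  finally show ?thesis .
qed

lemma mult_mat_vec_commute_left:
  fixes A B :: "'a :: semiring_1 mat"
  assumes A: "A \<in> carrier_mat k k" and B: "B \<in> carrier_mat k k" and AB: "A * B = B * A"
    and "dim_vec v = k"
  shows "A *\<^sub>v (B *\<^sub>v v) = B *\<^sub>v (A *\<^sub>v v)"
proof -
  have v: "v \<in> carrier_vec k" using \<open>dim_vec v = k\<close> by auto
  have "A *\<^sub>v (B *\<^sub>v v) = (A * B) *\<^sub>v v" using assoc_mult_mat_vec[OF A B v] by simp
  also have "\<dots> = B *\<^sub>v (A *\<^sub>v v)" unfolding AB by (rule assoc_mult_mat_vec[OF B A v])
  finally show ?thesis .
qed

lemma dim_mat_diag[simp]: "dim_row (mat_diag k f) = k" "dim_col (mat_diag k f) = k"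
  unfolding mat_diag_def by auto

lemma transpose_mat_diag[simp]: "(mat_diag k f)\<^sup>T = mat_diag k f"
  by (auto intro!: eq_matI simp: mat_diag_def)

lemma mat_diag_cong: "(\<And>i. i < k \<Longrightarrow> f i = g i) \<Longrightarrow> mat_diag k f = mat_diag k g"
  unfolding mat_diag_def by (auto intro!: eq_matI)

lemma mat_diag_mult_vec: "dim_vec v = k \<Longrightarrow> mat_diag k f *\<^sub>v v = vec k (\<lambda>i. f i * v $ i)"
  by (auto intro!: eq_vecI simp: mat_diag_def scalar_prod_def sum.remove[of _ i for i])

lemma mat_diag_conj_index:
  "K \<in> carrier_mat p p \<Longrightarrow> i < p \<Longrightarrow> j < p \<Longrightarrow>
   (mat_diag p f * K * mat_diag p g) $$ (i, j) = f i * K $$ (i, j) * g j"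
  by (simp add: mat_diag_mult_left mat_diag_mult_right[of _ p p])

lemma mat_diag_diagonal:
  assumes "M \<in> carrier_mat p p" and "\<forall>i<p. \<forall>j<p. i \<noteq> j \<longrightarrow> M $$ (i, j) = 0"
  shows "M = mat_diag p (\<lambda>j. M $$ (j, j))"
  using assms by (auto intro!: eq_matI simp: mat_diag_def)

lemma submatrix_carrier_mat:
  "M \<in> carrier_mat r c \<Longrightarrow>
   submatrix M I J \<in> carrier_mat (card {i. i < r \<and> i \<in> I}) (card {j. j < c \<and> j \<in> J})"
  by (auto simp: dim_submatrix)

lemma submatrix_mult_mat_diag:
  assumes "M \<in> carrier_mat r c"
  shows "submatrix (M * mat_diag c g) I J =
    submatrix M I J * mat_diag (card {j. j < c \<and> j \<in> J}) (\<lambda>j. g (pick J j))"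
  unfolding mat_diag_mult_right[OF submatrix_carrier_mat[OF assms]] mat_diag_mult_right[OF assms]
  using assms by (auto intro!: eq_matI simp: submatrix_def pick_le)

lemma submatrix_mat_diag_mult:
  assumes "M \<in> carrier_mat r c"
  shows "submatrix (mat_diag r f * M) I J =
    mat_diag (card {i. i < r \<and> i \<in> I}) (\<lambda>i. f (pick I i)) * submatrix M I J"
  unfolding mat_diag_mult_left[OF submatrix_carrier_mat[OF assms]] mat_diag_mult_left[OF assms]
  using assms by (auto intro!: eq_matI simp: submatrix_def pick_le)

lemma submatrix_smult_mat: "submatrix (a \<cdot>\<^sub>m M) I J = a \<cdot>\<^sub>m submatrix M I J"
  by (auto intro!: eq_matI simp: submatrix_def pick_le)

lemma submatrix_transpose_mult:
  assumes "F \<in> carrier_mat n p"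
  shows "submatrix (F\<^sup>T * F) A A = (submatrix F UNIV A)\<^sup>T * submatrix F UNIV A"
  using assms
  by (auto intro!: eq_matI simp: submatrix_def pick_le pick_UNIV scalar_prod_def)

lemma subvec_mat_diag_mult:
  "dim_vec v = p \<Longrightarrow>
   subvec (mat_diag p f *\<^sub>v v) T = mat_diag (card {j. j < p \<and> j \<in> T}) (\<lambda>i. f (pick T i)) *\<^sub>v subvec v T"
  by (auto intro!: eq_vecI simp: subvec_def mat_diag_mult_vec pick_le)

lemma invertible_mat_iff_Units:
  assumes "M \<in> carrier_mat k k"
  shows "invertible_mat M \<longleftrightarrow> M \<in> Units (ring_mat TYPE('a :: semiring_1) k b)"
proof
  assume "invertible_mat M"
  then obtain B where MB: "M * B = 1\<^sub>m k" and BM: "B * M = 1\<^sub>m (dim_row B)"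
    using assms unfolding invertible_mat_def inverts_mat_def by auto
  have "B \<in> carrier_mat k k"
    using arg_cong[OF MB, of dim_col] arg_cong[OF BM, of dim_col] assms by auto
  with MB BM assms show "M \<in> Units (ring_mat TYPE('a) k b)"
    by (auto simp: Units_def ring_mat_simps)
next
  assume "M \<in> Units (ring_mat TYPE('a) k b)"
  with assms show "invertible_mat M"
    by (auto simp: Units_def ring_mat_simps invertible_mat_def inverts_mat_def)
qed

lemma invertible_matI:
  "M \<in> carrier_mat k k \<Longrightarrow> M * B = 1\<^sub>m k \<Longrightarrow> B * M = 1\<^sub>m k \<Longrightarrow> invertible_mat M"
  unfolding invertible_mat_def inverts_mat_def by (metis carrier_matD index_mult_mat(2) square_mat.simps)

lemma minv_inverse:
  assumes M: "M \<in> carrier_mat k k" and inv: "invertible_mat M"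
  shows "minv M \<in> carrier_mat k k" "M * minv M = 1\<^sub>m k" "minv M * M = 1\<^sub>m k"
proof -
  have "M \<in> Units (ring_mat TYPE(real) k ())" using inv invertible_mat_iff_Units[OF M, of "()"] by blast
  then have "mat_inverse M \<noteq> None" using mat_inverse(1)[OF M, of "()"] by blast
  then obtain B where "mat_inverse M = Some B" by blast
  with mat_inverse(2)[OF M this] show
    "minv M \<in> carrier_mat k k" "M * minv M = 1\<^sub>m k" "minv M * M = 1\<^sub>m k"
    unfolding minv_def by auto
qed

lemma minv_eqI:
  assumes M: "M \<in> carrier_mat k k" and B: "B \<in> carrier_mat k k"
    and MB: "M * B = 1\<^sub>m k" and BM: "B * M = 1\<^sub>m k"
  shows "minv M = B"
proof -
  have inv: "invertible_mat M" using M MB BM by (rule invertible_matI)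
  note minv = minv_inverse[OF M inv]
  have "minv M = (B * M) * minv M" using minv(1) by (simp add: BM)
  also have "\<dots> = B * (M * minv M)" using B M minv(1) by (rule assoc_mult_mat)
  also have "\<dots> = B" using B by (simp add: minv(2))
  finally show ?thesis .
qed

lemma conj_involution_inverse:
  fixes M B E :: "'a :: semiring_1 mat"
  assumes M: "M \<in> carrier_mat k k" and B: "B \<in> carrier_mat k k" and MB: "M * B = 1\<^sub>m k"
    and E: "E \<in> carrier_mat k k" and EE: "E * E = 1\<^sub>m k"
  shows "(E * M * E) * (E * B * E) = 1\<^sub>m k"
  using M B E
  by (simp add: mult_mat_assoc_dims mult_mat_cancel_left[OF E E EE] mult_mat_cancel_left[OF M B MB] EE)

lemma minv_conj_involution:
  assumes M: "M \<in> carrier_mat k k" and inv: "invertible_mat M"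
    and E: "E \<in> carrier_mat k k" and EE: "E * E = 1\<^sub>m k"
  shows "minv (E * M * E) = E * minv M * E"
proof (rule minv_eqI[of _ k])
  note minv = minv_inverse[OF M inv]
  show "E * M * E * (E * minv M * E) = 1\<^sub>m k"
    by (rule conj_involution_inverse[OF M minv(1,2) E EE])
  show "E * minv M * E * (E * M * E) = 1\<^sub>m k"
    by (rule conj_involution_inverse[OF minv(1) M minv(3) E EE])
qed (use M E minv_inverse[OF M inv] in auto)

lemma invertible_mat_conj_involution:
  fixes M E :: "real mat"
  assumes M: "M \<in> carrier_mat k k" and E: "E \<in> carrier_mat k k" and EE: "E * E = 1\<^sub>m k"
  shows "invertible_mat (E * M * E) \<longleftrightarrow> invertible_mat M"
proof -
  have conj: "invertible_mat (E * N * E)" if N: "N \<in> carrier_mat k k" and "invertible_mat N" for N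
  proof (rule invertible_matI)
    note minv = minv_inverse[OF N \<open>invertible_mat N\<close>]
    show "E * N * E * (E * minv N * E) = 1\<^sub>m k"
      by (rule conj_involution_inverse[OF N minv(1,2) E EE])
    show "E * minv N * E * (E * N * E) = 1\<^sub>m k"
      by (rule conj_involution_inverse[OF minv(1) N minv(3) E EE])
  qed (use N E in auto)
  have "E * (E * M * E) * E = M"
    using M E by (simp add: mult_mat_assoc_dims mult_mat_cancel_left[OF E E EE] EE)
  then show ?thesis using conj[of M] conj[of "E * M * E"] M E by fastforce
qed

lemma invertible_mat_smultD:
  fixes M :: "real mat"
  assumes M: "M \<in> carrier_mat k k" and inv: "invertible_mat (c \<cdot>\<^sub>m M)"
  shows "invertible_mat M"
proof -
  have cM: "c \<cdot>\<^sub>m M \<in> carrier_mat k k" using M by simp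
  note B = minv_inverse[OF cM inv]
  show ?thesis
  proof (rule invertible_matI[OF M])
    show "M * (c \<cdot>\<^sub>m minv (c \<cdot>\<^sub>m M)) = 1\<^sub>m k" "c \<cdot>\<^sub>m minv (c \<cdot>\<^sub>m M) * M = 1\<^sub>m k"
      using B M by (simp_all add: mult_smult_distrib mult_smult_assoc_mat)
  qed
qed

lemma proj_mult_involution:
  fixes F E :: "real mat"
  assumes F: "F \<in> carrier_mat n k" and E: "E \<in> carrier_mat k k" and EE: "E * E = 1\<^sub>m k"
    and ET: "E\<^sup>T = E" and inv: "invertible_mat (F\<^sup>T * F)"
  shows "F * E * minv ((F * E)\<^sup>T * (F * E)) * (F * E)\<^sup>T = F * minv (F\<^sup>T * F) * F\<^sup>T"
proof -
  have G: "F\<^sup>T * F \<in> carrier_mat k k" using F by simp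
  note dims = carrier_matD[OF F] carrier_matD[OF E] carrier_matD[OF minv_inverse(1)[OF G inv]]
  have "minv ((F * E)\<^sup>T * (F * E)) = E * minv (F\<^sup>T * F) * E"
    using dims by (simp add: transpose_mult_dims ET mult_mat_assoc_dims minv_conj_involution[OF G inv E EE, symmetric])
  then show ?thesis
    using dims by (simp add: transpose_mult_dims ET mult_mat_assoc_dims mult_mat_cancel_left[OF E E EE])
qed

lemma Fmat_carrier: "X \<in> carrier_mat n p \<Longrightarrow> Fmat X \<in> carrier_mat n p"
  by (auto simp: Fmat_def P1_def)

lemma Cmat_carrier: "X \<in> carrier_mat n p \<Longrightarrow> Cmat X \<in> carrier_mat p p"
  using Fmat_carrier[of X n p] unfolding Cmat_def by (intro smult_carrier_mat mult_carrier_mat) auto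

lemma submatrix_Fmat_carrier:
  "X \<in> carrier_mat n p \<Longrightarrow> submatrix (Fmat X) UNIV T \<in> carrier_mat n (card {j. j < p \<and> j \<in> T})"
  using submatrix_carrier_mat[OF Fmat_carrier, of X n p UNIV T] by simp

lemma submatrix_Cmat_carrier:
  "X \<in> carrier_mat n p \<Longrightarrow>
   submatrix (Cmat X) S T \<in> carrier_mat (card {j. j < p \<and> j \<in> S}) (card {j. j < p \<and> j \<in> T})"
  using submatrix_carrier_mat[OF Cmat_carrier] by blast

lemma invertible_Fmat_gram:
  assumes X: "X \<in> carrier_mat n p" and inv: "invertible_mat (submatrix (Cmat X) T T)"
  shows "invertible_mat ((submatrix (Fmat X) UNIV T)\<^sup>T * submatrix (Fmat X) UNIV T)"
proof (rule invertible_mat_smultD)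
  show "(submatrix (Fmat X) UNIV T)\<^sup>T * submatrix (Fmat X) UNIV T
    \<in> carrier_mat (card {j. j < p \<and> j \<in> T}) (card {j. j < p \<and> j \<in> T})"
    using submatrix_Fmat_carrier[OF X, of T] by simp
  show "invertible_mat (1 / real (dim_row X) \<cdot>\<^sub>m ((submatrix (Fmat X) UNIV T)\<^sup>T * submatrix (Fmat X) UNIV T))"
    using inv Fmat_carrier[OF X]
    by (simp add: Cmat_def submatrix_smult_mat submatrix_transpose_mult)
qed

lemma dim_v_vec:
  "X \<in> carrier_mat n p \<Longrightarrow> dim_vec b = p \<Longrightarrow>
   dim_vec (v_vec lam X b e) = card {j. j < p \<and> j \<in> compl_supp b}"
  using Cmat_carrier[of X n p] by (simp add: v_vec_def Let_def dim_submatrix)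

locale sign_flip =
  fixes p :: nat and d :: "nat \<Rightarrow> real"
  assumes sign: "j < p \<Longrightarrow> d j \<in> {-1, 1}"
begin

abbreviation sign_mat :: "real mat" where
  "sign_mat \<equiv> mat_diag p d"

abbreviation sign_block :: "nat set \<Rightarrow> real mat" where
  "sign_block T \<equiv> mat_diag (card {j. j < p \<and> j \<in> T}) (\<lambda>i. d (pick T i))"

lemma sign_cases: "j < p \<Longrightarrow> d j = 1 \<or> d j = -1"
  using sign by blast

lemma sign_square: "j < p \<Longrightarrow> d j * d j = 1"
  using sign_cases by fastforce

lemma sign_nonzero: "j < p \<Longrightarrow> d j \<noteq> 0"
  using sign_cases by fastforce

lemma sgn_sign: "j < p \<Longrightarrow> sgn (d j) = d j"
  using sign_cases by fastforce

lemma sign_mat_square: "sign_mat * sign_mat = 1\<^sub>m p"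
proof -
  have "mat_diag p (\<lambda>j. d j * d j) = mat_diag p (\<lambda>_. 1)"
    by (rule mat_diag_cong) (rule sign_square)
  then show ?thesis by simp
qed

lemma sign_block_square: "sign_block T * sign_block T = 1\<^sub>m (card {j. j < p \<and> j \<in> T})"
proof -
  have "mat_diag (card {j. j < p \<and> j \<in> T}) (\<lambda>i. d (pick T i) * d (pick T i)) =
    mat_diag (card {j. j < p \<and> j \<in> T}) (\<lambda>_. 1)"
    by (rule mat_diag_cong) (simp add: sign_square pick_le)
  then show ?thesis by simp
qed

lemma mult_sign_mat_sign_mat: "X \<in> carrier_mat n p \<Longrightarrow> X * sign_mat * sign_mat = X"
  by (simp only: assoc_mult_mat[of X n p _ p _ p] mat_diag_dim sign_mat_square right_mult_one_mat)

lemma is_design_mult_sign: "is_design n p X \<Longrightarrow> is_design n p (X * sign_mat)"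
  unfolding is_design_def using sign_cases by (auto simp: mat_diag_mult_right) fastforce+

lemma supp_sign_mult: "dim_vec b = p \<Longrightarrow> supp (sign_mat *\<^sub>v b) = supp b"
  using sign_nonzero by (auto simp: supp_def mat_diag_mult_vec)

lemma compl_supp_sign_mult: "dim_vec b = p \<Longrightarrow> compl_supp (sign_mat *\<^sub>v b) = compl_supp b"
  using sign_nonzero by (auto simp: compl_supp_def mat_diag_mult_vec)

lemma subvec_sgn_sign_mult:
  assumes "dim_vec b = p"
  shows "subvec (map_vec sgn (sign_mat *\<^sub>v b)) T = sign_block T *\<^sub>v subvec (map_vec sgn b) T"
proof -
  have "map_vec sgn (sign_mat *\<^sub>v b) = sign_mat *\<^sub>v map_vec sgn b"
    using assms by (auto intro!: eq_vecI simp: mat_diag_mult_vec sgn_mult sgn_sign)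
  then show ?thesis using assms by (simp add: subvec_mat_diag_mult)
qed

lemma Vmat_mult_sign:
  assumes X: "X \<in> carrier_mat n p"
  shows "Vmat (X * sign_mat) = Vmat X"
proof -
  let ?Q = "1\<^sub>m n - P1 n"
  let ?K = "X\<^sup>T * ?Q * X"
  have Q: "?Q \<in> carrier_mat n n" by (auto simp: P1_def)
  have K: "?K \<in> carrier_mat p p" using X Q by simp
  have "(X * sign_mat)\<^sup>T * ?Q * (X * sign_mat) = sign_mat * ?K * sign_mat"
    using carrier_matD[OF X] carrier_matD[OF Q] by (simp add: transpose_mult_dims mult_mat_assoc_dims)
  moreover have "(sign_mat * ?K * sign_mat) $$ (j, j) = ?K $$ (j, j)" if "j < p" for j
    using sign_square[OF that]
    by (subst mat_diag_conj_index[OF K that that]) (simp add: mult.commute mult.left_commute)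
  ultimately show ?thesis
    using X K by (auto simp: Vmat_def Let_def intro!: mat_diag_cong)
qed

lemma Fmat_mult_sign:
  assumes X: "X \<in> carrier_mat n p"
  shows "Fmat (X * sign_mat) = Fmat X * sign_mat"
proof -
  let ?W = "mat_diag p (\<lambda>j. 1 / sqrt (Vmat X $$ (j, j)))" and ?Q = "1\<^sub>m n - P1 n"
  have Q: "?Q \<in> carrier_mat n n" by (auto simp: P1_def)
  have "Fmat (X * sign_mat) = ?Q * (X * sign_mat) * ?W"
    using X by (simp add: Fmat_def Vmat_mult_sign)
  also have "\<dots> = ?Q * X * (sign_mat * ?W)"
    using X Q mult_carrier_mat[OF mat_diag_dim mat_diag_dim, of p d]
    by (simp add: assoc_mult_mat[of _ n n _ p _ p] assoc_mult_mat[of _ n p _ p _ p] del: mat_diag_diag)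
  also have "sign_mat * ?W = ?W * sign_mat"
    by (simp add: mult.commute)
  also have "?Q * X * (?W * sign_mat) = ?Q * X * ?W * sign_mat"
    using X Q by (simp add: assoc_mult_mat[of _ n p _ p _ p] del: mat_diag_diag)
  also have "\<dots> = Fmat X * sign_mat"
    using carrier_matD[OF X] by (simp add: Fmat_def)
  finally show ?thesis .
qed

lemma Cmat_mult_sign:
  assumes X: "X \<in> carrier_mat n p"
  shows "Cmat (X * sign_mat) = sign_mat * Cmat X * sign_mat"
proof -
  let ?F = "Fmat X"
  have F: "?F \<in> carrier_mat n p" using X by (rule Fmat_carrier)
  have "(?F * sign_mat)\<^sup>T * (?F * sign_mat) = sign_mat * (?F\<^sup>T * ?F) * sign_mat"
    using F by (simp add: transpose_mult_dims mult_mat_assoc_dims)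
  moreover have "c \<cdot>\<^sub>m (sign_mat * G * sign_mat) = sign_mat * (c \<cdot>\<^sub>m G) * sign_mat" if "G \<in> carrier_mat p p" for c G
    using that mult_smult_assoc_mat[of "sign_mat * G" p p sign_mat p c] mult_smult_distrib[of sign_mat p p G p c] by simp
  ultimately show ?thesis
    using X F by (simp add: Cmat_def Fmat_mult_sign)
qed

lemma submatrix_Fmat_mult_sign:
  assumes X: "X \<in> carrier_mat n p"
  shows "submatrix (Fmat (X * sign_mat)) UNIV T = submatrix (Fmat X) UNIV T * sign_block T"
  using X by (simp add: Fmat_mult_sign submatrix_mult_mat_diag[OF Fmat_carrier])

lemma submatrix_Cmat_mult_sign:
  assumes X: "X \<in> carrier_mat n p"
  shows "submatrix (Cmat (X * sign_mat)) S T =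
    sign_block S * submatrix (Cmat X) S T * sign_block T"
  using Cmat_carrier[OF X]
  by (simp add: Cmat_mult_sign[OF X] submatrix_mult_mat_diag[OF mult_carrier_mat[OF mat_diag_dim]]
      submatrix_mat_diag_mult)

lemma u_vec_mult_sign:
  assumes X: "X \<in> carrier_mat n p" and b: "dim_vec b = p" and e: "dim_vec e = n"
    and inv: "invertible_mat (submatrix (Cmat X) (supp b) (supp b))"
  shows "u_vec lam (X * sign_mat) b e = u_vec lam X (sign_mat *\<^sub>v b) e"
proof -
  define A where "A = supp b"
  define k where "k = card {j. j < p \<and> j \<in> A}"
  define E where "E = mat_diag k (\<lambda>i. d (pick A i))"
  define FA where "FA = submatrix (Fmat X) UNIV A"
  define CA where "CA = submatrix (Cmat X) A A"
  define z where "z = subvec (map_vec sgn b) A"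
  define Z where "Z = mat_diag k (\<lambda>i. z $ i)"
  have E: "E \<in> carrier_mat k k" and EE: "E * E = 1\<^sub>m k" and ET: "E\<^sup>T = E"
    by (simp_all only: E_def k_def mat_diag_dim sign_block_square transpose_mat_diag)
  have FA: "FA \<in> carrier_mat n k" and CA: "CA \<in> carrier_mat k k"
    unfolding FA_def CA_def k_def using X by (rule submatrix_Fmat_carrier, rule submatrix_Cmat_carrier)
  have CA_inv: "invertible_mat CA" using inv by (simp add: CA_def A_def)
  have Ci: "minv CA \<in> carrier_mat k k" by (rule minv_inverse(1)[OF CA CA_inv])
  have z: "dim_vec z = k" using b by (simp add: z_def subvec_def k_def)
  have Z: "Z \<in> carrier_mat k k" by (simp add: Z_def)
  have ZE: "Z * E = E * Z" by (simp add: Z_def E_def k_def mult.commute)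
  have Z': "mat_diag k (\<lambda>i. (E *\<^sub>v z) $ i) = E * Z"
    unfolding Z_def E_def k_def mat_diag_diag
    by (rule mat_diag_cong) (simp add: mat_diag_mult_vec z[unfolded k_def])
  note commute = mult_mat_commute_left[OF Z E ZE] mult_mat_vec_commute_left[OF Z E ZE]
  note dims = carrier_matD[OF E] carrier_matD[OF Z] carrier_matD[OF FA] carrier_matD[OF Ci]
  have "Z * (E * minv CA * E) * (FA * E)\<^sup>T = E * Z * minv CA * FA\<^sup>T"
    using dims
    by (simp add: transpose_mult_dims ET mult_mat_assoc_dims mult_mat_cancel_left[OF E E EE] commute)
  moreover have "(Z * (E * minv CA * E)) *\<^sub>v z = (E * Z * minv CA) *\<^sub>v (E *\<^sub>v z)"
    using dims z by (simp add: mult_mat_assoc_dims mult_mat_vec_assoc_dims commute)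
  ultimately show ?thesis
    using X b z Z' carrier_matD(1)[OF E]
    by (simp add: u_vec_def Let_def supp_sign_mult submatrix_Fmat_mult_sign submatrix_Cmat_mult_sign
        subvec_sgn_sign_mult minv_conj_involution[OF CA CA_inv E EE]
        flip: A_def k_def E_def FA_def CA_def z_def Z_def)
qed

lemma v_vec_mult_sign:
  assumes X: "X \<in> carrier_mat n p" and b: "dim_vec b = p" and e: "dim_vec e = n"
    and inv: "invertible_mat (submatrix (Cmat X) (supp b) (supp b))"
  shows "v_vec lam (X * sign_mat) b e = sign_block (compl_supp b) *\<^sub>v v_vec lam X (sign_mat *\<^sub>v b) e"
proof -
  define A where "A = supp b"
  define I where "I = compl_supp b"
  define k where "k = card {j. j < p \<and> j \<in> A}"
  define l where "l = card {j. j < p \<and> j \<in> I}"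
  define E where "E = mat_diag k (\<lambda>i. d (pick A i))"
  define EI where "EI = mat_diag l (\<lambda>i. d (pick I i))"
  define FA where "FA = submatrix (Fmat X) UNIV A"
  define FI where "FI = submatrix (Fmat X) UNIV I"
  define CA where "CA = submatrix (Cmat X) A A"
  define CIA where "CIA = submatrix (Cmat X) I A"
  define z where "z = subvec (map_vec sgn b) A"
  define R where "R = 1\<^sub>m n - FA * minv (FA\<^sup>T * FA) * FA\<^sup>T"
  have E: "E \<in> carrier_mat k k" and EE: "E * E = 1\<^sub>m k" and EI: "EI \<in> carrier_mat l l"
    and EIT: "EI\<^sup>T = EI"
    by (simp_all only: E_def EI_def k_def l_def mat_diag_dim sign_block_square transpose_mat_diag)
  have FA: "FA \<in> carrier_mat n k" and FI: "FI \<in> carrier_mat n l"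
    and CA: "CA \<in> carrier_mat k k" and CIA: "CIA \<in> carrier_mat l k"
    unfolding FA_def FI_def CA_def CIA_def k_def l_def using X
    by (rule submatrix_Fmat_carrier, rule submatrix_Fmat_carrier, rule submatrix_Cmat_carrier,
        rule submatrix_Cmat_carrier)
  have CA_inv: "invertible_mat CA" using inv by (simp add: CA_def A_def)
  have Ci: "minv CA \<in> carrier_mat k k" by (rule minv_inverse(1)[OF CA CA_inv])
  have z: "dim_vec z = k" using b by (simp add: z_def subvec_def k_def)
  have R: "R \<in> carrier_mat n n" unfolding R_def using FA by (intro minus_carrier_mat carrier_matI) auto
  have proj: "FA * E * minv ((FA * E)\<^sup>T * (FA * E)) * (FA * E)\<^sup>T = FA * minv (FA\<^sup>T * FA) * FA\<^sup>T"
    unfolding FA_def E_def k_def A_def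
    by (rule proj_mult_involution[OF submatrix_Fmat_carrier[OF X] mat_diag_dim sign_block_square
          transpose_mat_diag invertible_Fmat_gram[OF X inv]])
  note dims = carrier_matD[OF E] carrier_matD[OF EI] carrier_matD[OF FI] carrier_matD[OF CIA]
    carrier_matD[OF Ci] carrier_matD[OF R]
  have noise: "((FI * EI)\<^sup>T * R) *\<^sub>v e = EI *\<^sub>v ((FI\<^sup>T * R) *\<^sub>v e)"
    using dims e by (simp add: transpose_mult_dims EIT mult_mat_assoc_dims mult_mat_vec_assoc_dims)
  have bias: "(EI * CIA * E * (E * minv CA * E)) *\<^sub>v z = EI *\<^sub>v ((CIA * minv CA) *\<^sub>v (E *\<^sub>v z))"
    using dims z
    by (simp add: mult_mat_assoc_dims mult_mat_vec_assoc_dims mult_mat_cancel_left[OF E E EE]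
        mult_mat_vec_cancel_left[OF E E EE])
  have "v_vec lam (X * sign_mat) b e =
    (1 / sqrt (real n)) \<cdot>\<^sub>v (EI *\<^sub>v ((FI\<^sup>T * R) *\<^sub>v e)) +
    (lam * sqrt (real n)) \<cdot>\<^sub>v (EI *\<^sub>v ((CIA * minv CA) *\<^sub>v (E *\<^sub>v z)))"
    using X b
    by (simp add: v_vec_def Let_def submatrix_Fmat_mult_sign proj
        submatrix_Cmat_mult_sign minv_conj_involution[OF CA CA_inv E EE] noise[symmetric] bias[symmetric]
        flip: A_def I_def k_def l_def E_def EI_def FA_def FI_def CA_def CIA_def z_def R_def)
  also have "\<dots> = EI *\<^sub>v ((1 / sqrt (real n)) \<cdot>\<^sub>v ((FI\<^sup>T * R) *\<^sub>v e) +
      (lam * sqrt (real n)) \<cdot>\<^sub>v ((CIA * minv CA) *\<^sub>v (E *\<^sub>v z)))"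
  proof -
    have "(FI\<^sup>T * R) *\<^sub>v e \<in> carrier_vec l" "(CIA * minv CA) *\<^sub>v (E *\<^sub>v z) \<in> carrier_vec l"
      using FI R CIA Ci E e z by (auto intro!: mult_mat_vec_carrier carrier_vecI)
    then show ?thesis by (simp add: mult_add_distrib_mat_vec[OF EI] mult_mat_vec[OF EI])
  qed
  also have "\<dots> = EI *\<^sub>v v_vec lam X (sign_mat *\<^sub>v b) e"
    using X b
    by (simp add: v_vec_def Let_def supp_sign_mult compl_supp_sign_mult subvec_sgn_sign_mult
        flip: A_def I_def k_def E_def FA_def FI_def CA_def CIA_def z_def R_def)
  finally show ?thesis by (simp add: EI_def l_def I_def)
qed

lemma S_event_mult_sign:
  assumes X: "X \<in> carrier_mat n p" and b: "dim_vec b = p" and e: "dim_vec e = n"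
    and inv: "invertible_mat (submatrix (Cmat X) (supp b) (supp b))"
  shows "S_event lam (X * sign_mat) b e \<longleftrightarrow> S_event lam X (sign_mat *\<^sub>v b) e"
proof -
  define A where "A = supp b"
  define k where "k = card {j. j < p \<and> j \<in> A}"
  define E where "E = mat_diag k (\<lambda>i. d (pick A i))"
  define z where "z = subvec (map_vec sgn b) A"
  define VA where "VA = mat_diag k (\<lambda>i. sqrt (submatrix (Vmat X) A A $$ (i, i)))"
  have z: "dim_vec z = k" and Ez: "dim_vec (E *\<^sub>v z) = k" and bA: "dim_vec (subvec b A) = k"
    using b by (simp_all add: z_def E_def subvec_def k_def)
  have z': "subvec (map_vec sgn (sign_mat *\<^sub>v b)) A = E *\<^sub>v z"
    using b by (simp add: subvec_sgn_sign_mult z_def E_def k_def)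
  have b': "subvec (sign_mat *\<^sub>v b) A = E *\<^sub>v subvec b A"
    using b by (simp add: subvec_mat_diag_mult E_def k_def)
  have rhs: "(mat_diag k (\<lambda>i. (E *\<^sub>v z) $ i) * VA) *\<^sub>v (E *\<^sub>v subvec b A) =
    (mat_diag k (\<lambda>i. z $ i) * VA) *\<^sub>v subvec b A"
    using z bA sign_square pick_le
    by (auto intro!: eq_vecI simp: E_def VA_def mat_diag_mult_vec k_def mult.commute mult.left_commute)
  have dim: "dim_row (X * sign_mat) = dim_row X" by simp
  show ?thesis
    unfolding S_event_def Let_def supp_sign_mult[OF b] dim Vmat_mult_sign[OF X]
      u_vec_mult_sign[OF X b e inv] A_def[symmetric] z_def[symmetric] z' b' z Ez VA_def[symmetric] rhs ..
qed

lemma I_event_mult_sign: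
  assumes X: "X \<in> carrier_mat n p" and b: "dim_vec b = p" and e: "dim_vec e = n"
    and inv: "invertible_mat (submatrix (Cmat X) (supp b) (supp b))"
  shows "I_event lam (X * sign_mat) b e \<longleftrightarrow> I_event lam X (sign_mat *\<^sub>v b) e"
proof -
  have dim: "dim_vec (v_vec lam X (sign_mat *\<^sub>v b) e) = card {j. j < p \<and> j \<in> compl_supp b}"
    using X b by (simp add: dim_v_vec compl_supp_sign_mult)
  have "\<bar>d (pick (compl_supp b) i)\<bar> = 1" if "i < card {j. j < p \<and> j \<in> compl_supp b}" for i
    using sign_cases[OF pick_le[OF that]] by auto
  with X dim show ?thesis
    by (simp add: I_event_def Let_def v_vec_mult_sign[OF X b e inv] mat_diag_mult_vec abs_mult)
qed

lemma admissible_mult_sign_iff: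
  assumes X: "X \<in> carrier_mat n p" and b: "dim_vec b = p"
  shows "admissible n p (sign_mat *\<^sub>v b) X \<longleftrightarrow> admissible n p b (X * sign_mat)"
proof -
  have "is_design n p X \<longleftrightarrow> is_design n p (X * sign_mat)"
    using is_design_mult_sign[of n X] is_design_mult_sign[of n "X * sign_mat"] X
    by (auto simp: mult_sign_mat_sign_mat)
  moreover have "invertible_mat (submatrix (Cmat (X * sign_mat)) (supp b) (supp b)) \<longleftrightarrow>
    invertible_mat (submatrix (Cmat X) (supp b) (supp b))"
    unfolding submatrix_Cmat_mult_sign[OF X]
    by (rule invertible_mat_conj_involution[OF submatrix_carrier_mat[OF Cmat_carrier[OF X]]
          mat_diag_dim sign_block_square])
  ultimately show ?thesis
    using b by (simp add: admissible_def supp_sign_mult Vmat_mult_sign[OF X])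
qed

lemma phi_mult_sign:
  assumes b: "dim_vec b = p" and adm: "admissible n p (sign_mat *\<^sub>v b) X"
  shows "phi lam X (sign_mat *\<^sub>v b) = phi lam (X * sign_mat) b"
proof -
  have X: "X \<in> carrier_mat n p" using adm by (simp add: admissible_def is_design_def)
  have inv: "invertible_mat (submatrix (Cmat X) (supp b) (supp b))"
    using adm b by (simp add: admissible_def supp_sign_mult)
  show ?thesis
    using X S_event_mult_sign[OF X b _ inv] I_event_mult_sign[OF X b _ inv]
    by (simp add: phi_def)
qed

end

theorem theorem1:
  fixes n p :: nat and b :: "real vec" and Zt :: "real mat" and lam :: real
  assumes "dim_vec b = p"
    and "supp b \<noteq> {}"
    and "\<forall>j<p. b $ j \<noteq> 0 \<longrightarrow> sgn (b $ j) = 1"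
    and "lam > 0"
    and "Zt \<in> carrier_mat p p"
    and "\<forall>i<p. \<forall>j<p. i \<noteq> j \<longrightarrow> Zt $$ (i,j) = 0"
    and "\<forall>i<p. Zt $$ (i,i) \<in> {-1, 1}"
  shows "(\<forall>X. admissible n p (Zt *\<^sub>v b) X \<longrightarrow>
            phi lam X (Zt *\<^sub>v b) = phi lam (X * Zt) b)
       \<and> (\<forall>Xs. admissible n p b Xs \<and> (\<forall>X. admissible n p b X \<longrightarrow> phi lam X b \<le> phi lam Xs b)
            \<longrightarrow> admissible n p (Zt *\<^sub>v b) (Xs * Zt) \<and>
                (\<forall>X. admissible n p (Zt *\<^sub>v b) X \<longrightarrow>
                   phi lam X (Zt *\<^sub>v b) \<le> phi lam (Xs * Zt) (Zt *\<^sub>v b)))"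
proof -
  define d where "d j = Zt $$ (j, j)" for j
  interpret sign_flip p d using assms(7) by unfold_locales (simp add: d_def)
  have Zt: "Zt = sign_mat" unfolding d_def using assms(5,6) by (rule mat_diag_diagonal)
  note b = assms(1)
  have flip: "phi lam X (Zt *\<^sub>v b) = phi lam (X * Zt) b" if "admissible n p (Zt *\<^sub>v b) X" for X
    using phi_mult_sign[OF b] that unfolding Zt .
  have adm_iff: "admissible n p (Zt *\<^sub>v b) X \<longleftrightarrow> admissible n p b (X * Zt)"
    if "X \<in> carrier_mat n p" for X
    using admissible_mult_sign_iff[OF that b] unfolding Zt .
  have carrier: "X \<in> carrier_mat n p" if "admissible n p c X" for c X
    using that by (simp add: admissible_def is_design_def)
  show ?thesis
  proof (intro conjI allI impI)
    fix X assume "admissible n p (Zt *\<^sub>v b) X"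
    then show "phi lam X (Zt *\<^sub>v b) = phi lam (X * Zt) b" by (rule flip)
  next
    fix Xs assume opt: "admissible n p b Xs \<and> (\<forall>X. admissible n p b X \<longrightarrow> phi lam X b \<le> phi lam Xs b)"
    have Xs: "Xs \<in> carrier_mat n p" using opt carrier by blast
    have XsZZ: "Xs * Zt * Zt = Xs" unfolding Zt using Xs by (rule mult_sign_mat_sign_mat)
    show adm: "admissible n p (Zt *\<^sub>v b) (Xs * Zt)"
      using opt adm_iff[of "Xs * Zt"] Xs assms(5) XsZZ by simp
    fix X assume X: "admissible n p (Zt *\<^sub>v b) X"
    have "phi lam X (Zt *\<^sub>v b) = phi lam (X * Zt) b" using X by (rule flip)
    also have "\<dots> \<le> phi lam Xs b" using opt X adm_iff[OF carrier[OF X]] by blast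
    also have "\<dots> = phi lam (Xs * Zt) (Zt *\<^sub>v b)" using flip[OF adm] XsZZ by simp
    finally show "phi lam X (Zt *\<^sub>v b) \<le> phi lam (Xs * Zt) (Zt *\<^sub>v b)" .
  qed
qed

end
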